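(* Assume $\sigma_1(x)=\tfrac12\sigma_1''(0)(x-a_1)(x-b_1)$ and $\sigma_2(x)=\tfrac12\sigma_2''(0)(x-a_2)(x-b_2)$ with $\sigma_1''(0)\neq0$, $\sigma_2''(0)\neq0$ and real zeros satisfying $a_1<0<b_1<a_2\le b_2$, and assume $q^2\Lambda_q<0$, where $\Lambda_q=q^{-2}\Big[1+\frac{(1-q^{-1})\tau'(0)}{\frac12\sigma_1''(0)}\Big]$. Put $a=a_1$, $b=b_1$ and $$\rho(x)=\frac{(qx/a,\,qx/b;q)_\infty}{(x/a_2,\,x/b_2;q)_\infty}.$$ Then there exist polynomials $P_n$, $n\in\mathbb{N}_0$, with $P_n$ of degree $n$ a solution of the q-EHT with $\lambda=\lambda_n$, and nonzero constants $d_n^2$, such that for all $m,n\in\mathbb{N}_0$ $$\int_a^b P_n(x)P_m(x)\rho(x)\,d_qx=d_n^2\delta_{mn},$$ i.e. the $P_n$ are orthogonal with respect to $\rho$ supported on $\{q^ka\}_{k\in\mathbb{N}_0}\cup\{q^kb\}_{k\in\mathbb{N}_0}$.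
   Context: Throughout $0<q<1$. For a function $y$ and $\zeta\in\{q,q^{-1}\}$, $D_\zeta y(x)=\frac{y(x)-y(\zeta x)}{(1-\zeta)x}$ for $x\ne0$ and $D_\zeta y(0)=y'(0)$; $[n]_q=\frac{1-q^n}{1-q}$. Let $\sigma_1$ be a real polynomial of degree at most two, $\tau(x)=\tau'(0)x+\tau(0)$ a real polynomial with $\tau'(0)\ne0$, and $\sigma_2(x):=q[\sigma_1(x)+(1-q^{-1})x\tau(x)]$. The q-EHT with parameter $n\in\mathbb{N}_0$ is $\sigma_1(x)D_{q^{-1}}D_qy(x)+\tau(x)D_qy(x)+\lambda_ny(x)=0$, where $\lambda_n=-[n]_q\big(\tau'(0)+\tfrac12[n-1]_{q^{-1}}\sigma_1''(0)\big)$. Notation: $(\alpha;q)_\infty=\prod_{k\ge0}(1-\alpha q^k)$ and $(\alpha_1,\dots,\alpha_r;q)_\infty=\prod_{i}(\alpha_i;q)_\infty$. For $a<0<b$ the $q$-Jackson integral is $\int_a^b f(x)\,d_qx=(1-q)b\sum_{j\ge0}q^jf(q^jb)+(1-q)(-a)\sum_{j\ge0}q^jf(q^ja)$. *)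

theory Defs
  imports "HOL-Analysis.Analysis" "HOL-Computational_Algebra.Polynomial"
begin

definition qD :: "real \<Rightarrow> (real \<Rightarrow> real) \<Rightarrow> real \<Rightarrow> real" where
  "qD \<zeta> y x = (if x = 0 then deriv y 0 else (y x - y (\<zeta> * x)) / ((1 - \<zeta>) * x))"

definition qnum :: "real \<Rightarrow> nat \<Rightarrow> real" where
  "qnum q n = (1 - q ^ n) / (1 - q)"

definition qpoch_inf :: "real \<Rightarrow> real \<Rightarrow> real" where
  "qpoch_inf \<alpha> q = (\<Prod>k. 1 - \<alpha> * q ^ k)"

definition jackson_int :: "real \<Rightarrow> real \<Rightarrow> real \<Rightarrow> (real \<Rightarrow> real) \<Rightarrow> real" where
  "jackson_int q a b f =
     (1 - q) * b * (\<Sum>j. q ^ j * f (q ^ j * b)) + (1 - q) * (- a) * (\<Sum>j. q ^ j * f (q ^ j * a))"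

definition dd0 :: "real poly \<Rightarrow> real" where
  "dd0 p = poly (pderiv (pderiv p)) 0"

definition sigma2 :: "real \<Rightarrow> real poly \<Rightarrow> real poly \<Rightarrow> real poly" where
  "sigma2 q \<sigma>1 \<tau> = smult q (\<sigma>1 + smult (1 - 1/q) ([:0, 1:] * \<tau>))"

definition qEHT_lambda :: "real \<Rightarrow> real poly \<Rightarrow> real poly \<Rightarrow> nat \<Rightarrow> real" where
  "qEHT_lambda q \<sigma>1 \<tau> n =
     - qnum q n * (poly (pderiv \<tau>) 0 + (1/2) * qnum (1/q) (n - 1) * dd0 \<sigma>1)"

definition solves_qEHT :: "real \<Rightarrow> real poly \<Rightarrow> real poly \<Rightarrow> real \<Rightarrow> (real \<Rightarrow> real) \<Rightarrow> bool" where
  "solves_qEHT q \<sigma>1 \<tau> lam y \<longleftrightarrow>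
     (\<forall>x. poly \<sigma>1 x * qD (1/q) (qD q y) x + poly \<tau> x * qD q y x + lam * y x = 0)"

end

theory Submission
  imports Defs
begin

text \<open>
  The weighted Jackson integral \<open>\<Phi>(p) = \<integral>\<^sub>a\<^sup>b p \<rho> d\<^sub>qx\<close> is a positive definite functional on
  polynomials: \<open>\<rho>\<close> is positive at the lattice points \<open>q\<^sup>ja, q\<^sup>jb\<close>, and a nonzero polynomial cannot
  vanish on the infinitely many points \<open>q\<^sup>jb\<close>. Gram--Schmidt therefore produces monic orthogonal
  polynomials \<open>P\<^sub>n\<close>. The weight satisfies the Pearson equation \<open>q \<sigma>\<^sub>1(qx) \<rho>(qx) = \<sigma>\<^sub>2(x) \<rho>(x)\<close>, so on each
  branch of the lattice the sum of \<open>x (L y \<cdot> z - y \<cdot> L z) \<rho>\<close> telescopes; since \<open>\<sigma>\<^sub>1(a) = \<sigma>\<^sub>1(b) = 0\<close>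
  only the boundary value at \<open>0\<close> survives, and it is the same on both branches. Hence the q-EHT
  operator \<open>L\<close> is symmetric for \<open>\<Phi>\<close>. As \<open>L\<close> does not raise degrees and acts on the leading
  coefficient by \<open>-\<lambda>\<^sub>n\<close>, the polynomial \<open>L P\<^sub>n + \<lambda>\<^sub>n P\<^sub>n\<close> has degree below \<open>n\<close> and is orthogonal to all
  polynomials of degree below \<open>n\<close>, so it vanishes.
\<close>

section \<open>The q-EHT operator on polynomials\<close>

definition qderiv_poly :: "real \<Rightarrow> real poly \<Rightarrow> real poly" where
  "qderiv_poly q p = (\<Sum>k<degree p. monom (coeff p (Suc k) * qnum q (Suc k)) k)"

lemma coeff_qderiv_poly: "coeff (qderiv_poly q p) j = coeff p (Suc j) * qnum q (Suc j)"
proof (cases "j < degree p")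
  case False
  then have "coeff p (Suc j) = 0" by (intro coeff_eq_0) simp
  with False show ?thesis by (simp add: qderiv_poly_def coeff_sum coeff_monom)
qed (simp add: qderiv_poly_def coeff_sum coeff_monom)

lemma qD_poly:
  assumes "q \<noteq> 1"
  shows "qD q (poly p) = poly (qderiv_poly q p)"
proof
  fix x
  show "qD q (poly p) x = poly (qderiv_poly q p) x"
  proof (cases "x = 0")
    case True
    have "deriv (poly p) 0 = poly (pderiv p) 0" by (rule DERIV_imp_deriv) (rule poly_DERIV)
    with True assms show ?thesis
      by (simp add: qD_def poly_0_coeff_0 coeff_pderiv coeff_qderiv_poly qnum_def)
  next
    case False
    have "poly p x - poly p (q * x) = (\<Sum>i<degree p. coeff p (Suc i) * (x ^ Suc i - (q * x) ^ Suc i))"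
      by (simp add: poly_altdef sum.atMost_shift sum_subtractf[symmetric] algebra_simps)
    also have "\<dots> = (\<Sum>i<degree p. (1 - q) * x * (coeff p (Suc i) * qnum q (Suc i) * x ^ i))"
      using assms by (intro sum.cong refl) (simp add: qnum_def power_mult_distrib field_simps)
    also have "\<dots> = (1 - q) * x * poly (qderiv_poly q p) x"
      by (simp add: qderiv_poly_def poly_sum poly_monom sum_distrib_left)
    finally show ?thesis using False assms by (simp add: qD_def)
  qed
qed

definition qEHT_op :: "real \<Rightarrow> real poly \<Rightarrow> real poly \<Rightarrow> real poly \<Rightarrow> real poly" where
  "qEHT_op q s t p = s * qderiv_poly (1/q) (qderiv_poly q p) + t * qderiv_poly q p"

lemma poly_qEHT_op:
  assumes "q \<noteq> 0" "q \<noteq> 1"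
  shows "poly (qEHT_op q s t p) x = poly s x * qD (1/q) (qD q (poly p)) x + poly t x * qD q (poly p) x"
  using assms by (simp add: qEHT_op_def qD_poly)

lemma solves_qEHT_poly_iff:
  assumes "q \<noteq> 0" "q \<noteq> 1"
  shows "solves_qEHT q s t lam (poly p) \<longleftrightarrow> qEHT_op q s t p + smult lam p = 0"
proof -
  have "solves_qEHT q s t lam (poly p) \<longleftrightarrow> (\<forall>x. poly (qEHT_op q s t p + smult lam p) x = 0)"
    using assms by (simp add: solves_qEHT_def poly_qEHT_op)
  also have "\<dots> \<longleftrightarrow> qEHT_op q s t p + smult lam p = 0" by (rule poly_all_0_iff_0)
  finally show ?thesis .
qed

lemma coeff_qEHT_op:
  "coeff (qEHT_op q [:s0, s1, s2:] [:t0, t1:] p) n =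
     s0 * coeff p (n + 2) * qnum q (n + 2) * qnum (1/q) (n + 1)
   + s1 * coeff p (n + 1) * qnum q (n + 1) * qnum (1/q) n
   + s2 * coeff p n * qnum q n * qnum (1/q) (n - 1)
   + t0 * coeff p (n + 1) * qnum q (n + 1) + t1 * coeff p n * qnum q n"
  by (cases n; cases "n - 1") (auto simp: qEHT_op_def coeff_qderiv_poly qnum_def algebra_simps)

lemma degree_le_2_eq: "degree s \<le> 2 \<Longrightarrow> s = [:coeff s 0, coeff s 1, coeff s 2:]"
  by (rule poly_eqI) (auto simp: coeff_pCons coeff_eq_0 numeral_2_eq_2 split: nat.split)

lemma degree_le_1_eq: "degree t \<le> 1 \<Longrightarrow> t = [:coeff t 0, coeff t 1:]"
  by (rule poly_eqI) (auto simp: coeff_pCons coeff_eq_0 split: nat.split)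

lemma degree_qEHT_op_le:
  assumes "degree s \<le> 2" "degree t \<le> 1"
  shows "degree (qEHT_op q s t p) \<le> degree p"
proof (rule degree_le, intro allI impI)
  fix i assume "degree p < i"
  then have "coeff p i = 0" "coeff p (i + 1) = 0" "coeff p (i + 2) = 0" by (auto intro: coeff_eq_0)
  then show "coeff (qEHT_op q s t p) i = 0"
    by (subst degree_le_2_eq[OF assms(1)], subst degree_le_1_eq[OF assms(2)]) (simp add: coeff_qEHT_op)
qed

lemma qEHT_lambda_eq: "qEHT_lambda q s t n = - qnum q n * (coeff t 1 + qnum (1/q) (n - 1) * coeff s 2)"
  by (simp add: qEHT_lambda_def dd0_def poly_0_coeff_0 coeff_pderiv numeral_2_eq_2)

lemma coeff_qEHT_op_top:
  assumes "degree s \<le> 2" "degree t \<le> 1" "degree p \<le> n"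
  shows "coeff (qEHT_op q s t p) n = - qEHT_lambda q s t n * coeff p n"
proof -
  have "coeff p (n + 1) = 0" "coeff p (n + 2) = 0" using assms(3) by (auto intro: coeff_eq_0)
  then show ?thesis
    by (subst degree_le_2_eq[OF assms(1)], subst degree_le_1_eq[OF assms(2)])
      (simp add: coeff_qEHT_op qEHT_lambda_eq algebra_simps)
qed

definition q_wronskian :: "real \<Rightarrow> real poly \<Rightarrow> real poly \<Rightarrow> real poly" where
  "q_wronskian q y z = (pcompose y [:0, q:] * z - pcompose z [:0, q:] * y) div [:0, 1:]"

lemma poly_q_wronskian:
  "x * poly (q_wronskian q y z) x = poly y (q * x) * poly z x - poly z (q * x) * poly y x"
proof -
  let ?w = "pcompose y [:0, q:] * z - pcompose z [:0, q:] * y"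
  have "poly ?w 0 = 0" by (simp add: poly_pcompose)
  then have "[:- 0, 1:] dvd ?w" by (simp only: poly_eq_0_iff_dvd)
  then have "[:0, 1:] dvd ?w" by simp
  then have "?w = [:0, 1:] * q_wronskian q y z"
    unfolding q_wronskian_def by (rule dvd_mult_div_cancel[symmetric])
  then have "poly ?w x = x * poly (q_wronskian q y z) x" by simp
  then show ?thesis by (simp add: poly_pcompose mult.commute)
qed

lemma qEHT_op_difference_form:
  assumes "q \<noteq> 0" "q \<noteq> 1" "x \<noteq> 0"
  shows "(1 - q)^2 * x^2 * poly (qEHT_op q s t y) x =
    poly (sigma2 q s t) x * (poly y (q * x) - poly y x) + q^2 * poly s x * (poly y (x / q) - poly y x)"
proof -
  have nz: "1 - q \<noteq> 0" using assms(2) by simp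
  have Dq: "qD q (poly y) u = (poly y u - poly y (q * u)) / ((1 - q) * u)" if "u \<noteq> 0" for u
    using that by (simp add: qD_def)
  \<comment> \<open>Stated for an abstract \<open>m = 1 - q\<close>: otherwise \<open>field_simps\<close> produces both \<open>1 - q\<close> and \<open>q - 1\<close>
    as denominators and cannot cancel them.\<close>
  have alg: "m^2 * x^2 * (S * (q * ((Yp - Yc) / (m * (x / q)) - (Yc - Yq) / (m * x)) / (m * x))
      + T * ((Yc - Yq) / (m * x))) = (q * S - m * x * T) * (Yq - Yc) + q^2 * S * (Yp - Yc)"
    if "m \<noteq> 0" for m S T Yc Yp Yq :: real
    using that assms by (simp add: field_simps power2_eq_square)
  have "qD (1/q) F x = q * (F (x / q) - F x) / ((1 - q) * x)" for F
    using assms by (simp add: qD_def field_simps)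
  then have "qD (1/q) (qD q (poly y)) x = q * (qD q (poly y) (x / q) - qD q (poly y) x) / ((1 - q) * x)" .
  also have "\<dots> = q * ((poly y (x / q) - poly y x) / ((1 - q) * (x / q))
      - (poly y x - poly y (q * x)) / ((1 - q) * x)) / ((1 - q) * x)"
    using assms by (simp add: Dq)
  finally have DD: "qD (1/q) (qD q (poly y)) x = \<dots>" .
  have "poly (sigma2 q s t) x = q * poly s x - (1 - q) * x * poly t x"
    using assms by (simp add: sigma2_def algebra_simps)
  then show ?thesis
    unfolding poly_qEHT_op[OF assms(1,2)] DD Dq[OF assms(3)]
    using alg[OF nz, where S = "poly s x" and T = "poly t x" and Yc = "poly y x"
      and Yp = "poly y (x / q)" and Yq = "poly y (q * x)"] by simp
qed

lemma qEHT_op_wronskian: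
  assumes "q \<noteq> 0" "q \<noteq> 1" "x \<noteq> 0"
  shows "(1 - q)^2 * x * (poly (qEHT_op q s t y) x * poly z x - poly (qEHT_op q s t z) x * poly y x)
    = poly (sigma2 q s t) x * poly (q_wronskian q y z) x - q * poly s x * poly (q_wronskian q y z) (x / q)"
proof -
  let ?L = "qEHT_op q s t" and ?W = "poly (q_wronskian q y z)"
  have W': "x * ?W (x / q) = q * (poly y x * poly z (x / q) - poly z x * poly y (x / q))"
    using poly_q_wronskian[of "x / q" q y z] assms by (simp add: field_simps)
  have "x * ((1 - q)^2 * x * (poly (?L y) x * poly z x - poly (?L z) x * poly y x))
      = poly z x * ((1 - q)^2 * x^2 * poly (?L y) x) - poly y x * ((1 - q)^2 * x^2 * poly (?L z) x)"
    by (simp add: algebra_simps power2_eq_square)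
  also have "\<dots> = poly (sigma2 q s t) x * (poly y (q * x) * poly z x - poly z (q * x) * poly y x)
      + q^2 * poly s x * (poly y (x / q) * poly z x - poly z (x / q) * poly y x)"
    by (simp only: qEHT_op_difference_form[OF assms]) (simp add: algebra_simps)
  also have "\<dots> = poly (sigma2 q s t) x * (x * ?W x) - q * poly s x * (x * ?W (x / q))"
    by (simp only: poly_q_wronskian W') (simp add: algebra_simps power2_eq_square)
  also have "\<dots> = x * (poly (sigma2 q s t) x * ?W x - q * poly s x * ?W (x / q))"
    by (simp add: algebra_simps)
  finally show ?thesis using assms(3) by simp
qed

section \<open>Positive functionals on polynomials\<close>

locale positive_poly_functional =
  fixes \<Phi> :: "real poly \<Rightarrow> real"
  assumes additive: "\<Phi> (p + r) = \<Phi> p + \<Phi> r"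
    and homogeneous: "\<Phi> (smult c p) = c * \<Phi> p"
    and square_pos: "p \<noteq> 0 \<Longrightarrow> \<Phi> (p * p) > 0"
begin

lemma zero [simp]: "\<Phi> 0 = 0"
  using homogeneous[of 0 0] by simp

lemma diff: "\<Phi> (p - r) = \<Phi> p - \<Phi> r"
  using additive[of "p - r" r] by simp

lemma sum: "\<Phi> (\<Sum>i\<in>A. f i) = (\<Sum>i\<in>A. \<Phi> (f i))"
  by (induction A rule: infinite_finite_induct) (simp_all add: additive)

lemma orthogonal_lower_degree:
  assumes monic: "\<And>i. i < n \<Longrightarrow> degree (P i) = i \<and> coeff (P i) i = 1"
    and orth: "\<And>i. i < n \<Longrightarrow> \<Phi> (p * P i) = 0"
    and "degree r < n"
  shows "\<Phi> (p * r) = 0"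
proof -
  have "\<Phi> (p * r) = 0" if "d \<le> n" "\<forall>i\<ge>d. coeff r i = 0" for d r
    using that
  proof (induction d arbitrary: r)
    case 0
    then have "r = 0" by (simp add: poly_eq_iff)
    then show ?case by simp
  next
    case (Suc d)
    define r' where "r' = r - smult (coeff r d) (P d)"
    have Pd: "degree (P d) = d" "coeff (P d) d = 1" using monic Suc.prems(1) by auto
    have "\<forall>i\<ge>d. coeff r' i = 0"
    proof (intro allI impI)
      fix i assume "d \<le> i"
      then consider "i = d" | "Suc d \<le> i" by linarith
      then show "coeff r' i = 0"
        using Suc.prems(2) Pd by cases (auto simp: r'_def coeff_eq_0)
    qed
    then have "\<Phi> (p * r') = 0" using Suc.IH Suc.prems(1) by simp
    moreover have "p * r = p * r' + smult (coeff r d) (p * P d)"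
      by (simp add: r'_def algebra_simps mult_smult_right)
    ultimately show ?case using orth Suc.prems(1) by (simp add: additive homogeneous)
  qed
  moreover have "\<forall>i\<ge>n. coeff r i = 0" using assms(3) by (auto intro: coeff_eq_0)
  ultimately show ?thesis by blast
qed

lemma monic_orthogonal_family:
  "\<exists>P. (\<forall>i<n. degree (P i) = i \<and> coeff (P i) i = 1) \<and> (\<forall>i<n. \<forall>j<n. i \<noteq> j \<longrightarrow> \<Phi> (P i * P j) = 0)"
proof (induction n)
  case (Suc n)
  then obtain P where monic: "\<And>i. i < n \<Longrightarrow> degree (P i) = i \<and> coeff (P i) i = 1"
    and orth: "\<And>i j. i < n \<Longrightarrow> j < n \<Longrightarrow> i \<noteq> j \<Longrightarrow> \<Phi> (P i * P j) = 0" by blast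
  define c where "c k = \<Phi> (monom 1 n * P k) / \<Phi> (P k * P k)" for k
  define v where "v = monom 1 n - (\<Sum>k<n. smult (c k) (P k))"
  have low: "coeff (\<Sum>k<n. smult (c k) (P k)) i = 0" if "n \<le> i" for i
    using monic that by (auto simp: coeff_sum intro!: sum.neutral coeff_eq_0)
  have vn: "coeff v n = 1" using low[of n] by (simp add: v_def)
  have vi: "coeff v i = 0" if "n < i" for i using low[of i] that by (simp add: v_def coeff_monom)
  have "degree v = n"
  proof (rule antisym)
    show "degree v \<le> n" using vi by (auto intro: degree_le)
    show "n \<le> degree v" using vn by (auto intro: le_degree)
  qed
  moreover have "\<Phi> (v * P j) = 0" if j: "j < n" for j
  proof -
    have "\<Phi> (v * P j) = \<Phi> (monom 1 n * P j) - (\<Sum>k<n. c k * \<Phi> (P k * P j))"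
      by (simp add: v_def left_diff_distrib sum_distrib_right mult_smult_left diff sum homogeneous)
    also have "(\<Sum>k<n. c k * \<Phi> (P k * P j)) = c j * \<Phi> (P j * P j)"
      using orth j by (subst sum.remove[of _ j]) auto
    also have "\<dots> = \<Phi> (monom 1 n * P j)"
    proof -
      have "P j \<noteq> 0" using monic[OF j] by auto
      then have "\<Phi> (P j * P j) \<noteq> 0" using square_pos by (metis less_irrefl)
      then show ?thesis by (simp add: c_def)
    qed
    finally show ?thesis by simp
  qed
  ultimately show ?case
    using vn monic orth by (intro exI[of _ "P(n := v)"]) (auto simp: less_Suc_eq mult.commute)
qed simp

lemma monic_orthogonal_exists:
  "\<exists>p. degree p = n \<and> coeff p n = 1 \<and> (\<forall>r. degree r < n \<longrightarrow> \<Phi> (p * r) = 0)"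
proof -
  obtain P where monic: "\<forall>i<Suc n. degree (P i) = i \<and> coeff (P i) i = 1"
    and orth: "\<forall>i<Suc n. \<forall>j<Suc n. i \<noteq> j \<longrightarrow> \<Phi> (P i * P j) = 0"
    using monic_orthogonal_family by blast
  show ?thesis
    using monic orth by (intro exI[of _ "P n"]) (auto intro: orthogonal_lower_degree[of n P])
qed

lemma symmetric_op_eigen:
  assumes deg_L: "\<And>r. degree (L r) \<le> degree r"
    and sym: "\<And>y z. \<Phi> (L y * z) = \<Phi> (y * L z)"
    and p: "degree p \<le> n" "\<And>r. degree r < n \<Longrightarrow> \<Phi> (p * r) = 0"
    and top: "coeff (L p) n = \<mu> * coeff p n"
  shows "L p = smult \<mu> p"
proof (rule ccontr)
  define e where "e = L p - smult \<mu> p"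
  assume "L p \<noteq> smult \<mu> p"
  then have "e \<noteq> 0" by (simp add: e_def)
  have "degree e \<le> n" using deg_L[of p] p(1) by (auto simp: e_def intro: degree_diff_le)
  moreover have "coeff e n = 0" using top by (simp add: e_def)
  ultimately have "degree e < n"
    using \<open>e \<noteq> 0\<close> by (metis le_neq_implies_less leading_coeff_0_iff)
  have "\<Phi> (e * r) = 0" if "degree r < n" for r
  proof -
    have "\<Phi> (e * r) = \<Phi> (p * L r) - \<mu> * \<Phi> (p * r)"
      by (simp add: e_def left_diff_distrib diff sym mult_smult_left homogeneous)
    then show ?thesis using p(2) that deg_L[of r] by simp
  qed
  then have "\<Phi> (e * e) = 0" using \<open>degree e < n\<close> by blast
  with square_pos[OF \<open>e \<noteq> 0\<close>] show False by simp
qed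

theorem orthogonal_eigenpolynomials:
  assumes deg_L: "\<And>r. degree (L r) \<le> degree r"
    and sym: "\<And>y z. \<Phi> (L y * z) = \<Phi> (y * L z)"
    and top: "\<And>p n. degree p \<le> n \<Longrightarrow> coeff (L p) n = \<mu> n * coeff p n"
  shows "\<exists>P d. (\<forall>n. degree (P n) = n \<and> L (P n) = smult (\<mu> n) (P n) \<and> d n \<noteq> 0) \<and>
     (\<forall>m n. \<Phi> (P n * P m) = (if m = n then d n else 0))"
proof -
  obtain P where P: "\<And>n. degree (P n) = n \<and> coeff (P n) n = 1 \<and> (\<forall>r. degree r < n \<longrightarrow> \<Phi> (P n * r) = 0)"
    using monic_orthogonal_exists by metis
  have "P n \<noteq> 0" for n using P[of n] by auto
  then have nonzero: "\<Phi> (P n * P n) \<noteq> 0" for n using square_pos by (metis less_irrefl)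
  have eigen: "L (P n) = smult (\<mu> n) (P n)" for n
    by (rule symmetric_op_eigen[OF deg_L sym]) (use P top in auto)
  have orth: "\<Phi> (P n * P m) = 0" if "m < n" for m n
    using that P[of n] P[of m] by simp
  define d where "d n = \<Phi> (P n * P n)" for n
  have "\<Phi> (P n * P m) = (if m = n then d n else 0)" for m n
  proof (cases m n rule: linorder_cases)
    case less then show ?thesis using orth[of m n] by simp
  next
    case equal then show ?thesis by (simp add: d_def)
  next
    case greater then show ?thesis using orth[of n m] by (simp add: mult.commute)
  qed
  moreover have "\<forall>n. degree (P n) = n \<and> L (P n) = smult (\<mu> n) (P n) \<and> d n \<noteq> 0"
    using P eigen nonzero by (simp add: d_def)
  ultimately show ?thesis by blast
qed

end

lemma convergent_prod_qpoch:
  assumes "0 \<le> q" "q < 1"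
  shows "convergent_prod (\<lambda>k. 1 - \<alpha> * q ^ k :: real)"
proof -
  have "summable (\<lambda>k. norm ((1 - \<alpha> * q ^ k) - 1))"
    using assms by (simp add: abs_mult power_abs summable_geometric)
  then show ?thesis
    by (intro abs_convergent_prod_imp_convergent_prod summable_imp_abs_convergent_prod)
qed

lemma qpoch_factor_pos:
  fixes q \<alpha> :: real
  assumes "0 \<le> q" "q < 1" "\<alpha> < 1"
  shows "1 - \<alpha> * q ^ k > 0"
proof (cases "\<alpha> \<le> 0")
  case True
  then have "\<alpha> * q ^ k \<le> 0" using assms by (simp add: mult_nonpos_nonneg)
  then show ?thesis by simp
next
  case False
  then have "\<alpha> * q ^ k \<le> \<alpha>" using assms by (simp add: mult_left_le power_le_one)
  then show ?thesis using assms by simp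
qed

lemma qpoch_inf_pos:
  assumes "0 \<le> q" "q < 1" "\<alpha> < 1"
  shows "qpoch_inf \<alpha> q > 0"
  unfolding qpoch_inf_def
  by (rule less_0_prodinf[OF convergent_prod_qpoch[OF assms(1,2)]]) (use qpoch_factor_pos[OF assms] in auto)

lemma qpoch_inf_rec:
  assumes "0 \<le> q" "q < 1" "\<alpha> \<noteq> 1"
  shows "qpoch_inf \<alpha> q = (1 - \<alpha>) * qpoch_inf (\<alpha> * q) q"
proof -
  have "qpoch_inf (\<alpha> * q) q = (\<Prod>n. 1 - \<alpha> * q ^ Suc n)"
    unfolding qpoch_inf_def by (simp add: mult.assoc)
  also have "\<dots> = qpoch_inf \<alpha> q / (1 - \<alpha>)"
    using prodinf_split_head[OF convergent_prod_qpoch[OF assms(1,2)], of \<alpha>] assms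
    by (simp add: qpoch_inf_def)
  finally show ?thesis using assms by simp
qed

lemma qpoch_inf_shift_tendsto:
  assumes "0 \<le> q" "q < 1" "\<alpha> < 1"
  shows "(\<lambda>N. qpoch_inf (\<alpha> * q ^ N) q) \<longlonglongrightarrow> 1"
proof -
  define f where "f k = 1 - \<alpha> * q ^ k" for k
  have cf: "convergent_prod f" unfolding f_def by (rule convergent_prod_qpoch[OF assms(1,2)])
  have nz: "f k \<noteq> 0" for k using qpoch_factor_pos[OF assms] unfolding f_def by (metis less_irrefl)
  then have P: "prodinf f \<noteq> 0" using prodinf_nonzero[OF cf] by blast
  have eq: "qpoch_inf (\<alpha> * q ^ N) q = prodinf f / (\<Prod>k<N. f k)" for N
  proof -
    have "qpoch_inf (\<alpha> * q ^ N) q = (\<Prod>k. f (k + N))"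
      unfolding qpoch_inf_def f_def by (simp add: power_add mult_ac)
    also have "\<dots> = prodinf f / (\<Prod>k<N. f k)"
      by (rule prodinf_divide_initial_segment[OF cf]) (use nz in auto)
    finally show ?thesis .
  qed
  have "(\<lambda>n. \<Prod>k<Suc n. f k) \<longlonglongrightarrow> prodinf f"
    using convergent_prod_LIMSEQ[OF cf] by (simp add: lessThan_Suc_atMost)
  then have "(\<lambda>n. \<Prod>k<n. f k) \<longlonglongrightarrow> prodinf f" by (rule LIMSEQ_imp_Suc)
  then have "(\<lambda>N. prodinf f / (\<Prod>k<N. f k)) \<longlonglongrightarrow> prodinf f / prodinf f"
    by (intro tendsto_intros P)
  then show ?thesis using P by (simp add: eq)
qed

section \<open>Symmetry of the q-EHT operator on a q-lattice\<close>

lemma summable_geometric_mult_convergent: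
  fixes g :: "nat \<Rightarrow> real"
  assumes "0 \<le> q" "q < 1" "convergent g"
  shows "summable (\<lambda>j. q ^ j * g j)"
proof -
  obtain K where K: "\<And>j. \<bar>g j\<bar> \<le> K"
    using convergent_imp_Bseq[OF assms(3)] by (auto simp: Bseq_def)
  show ?thesis
  proof (rule summable_comparison_test)
    have "\<bar>g j\<bar> * q ^ j \<le> K * q ^ j" for j using K assms by (intro mult_right_mono) auto
    then show "\<exists>N. \<forall>j\<ge>N. norm (q ^ j * g j) \<le> K * q ^ j"
      using assms by (auto simp: abs_mult mult.commute)
    show "summable (\<lambda>j. K * q ^ j)" using assms by (simp add: summable_geometric)
  qed
qed

lemma poly_geometric_tendsto:
  fixes q c :: real
  assumes "0 \<le> q" "q < 1"
  shows "(\<lambda>j. poly p (q ^ j * c)) \<longlonglongrightarrow> poly p 0"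
proof -
  have "(\<lambda>j. q ^ j * c) \<longlonglongrightarrow> 0 * c"
    by (intro tendsto_intros) (use assms in simp)
  then show ?thesis by (intro isCont_tendsto_compose[OF poly_isCont]) simp
qed

lemma qEHT_op_lattice_sums:
  fixes w :: "real \<Rightarrow> real"
  assumes q: "0 < q" "q < 1" and c: "c \<noteq> 0" "poly s c = 0"
    and pearson: "\<And>j. q * poly s (q ^ Suc j * c) * w (q ^ Suc j * c)
      = poly (sigma2 q s t) (q ^ j * c) * w (q ^ j * c)"
    and lim: "(\<lambda>j. w (q ^ j * c)) \<longlonglongrightarrow> w\<^sub>0"
  shows "(\<lambda>j. q ^ j * c * (poly (qEHT_op q s t y) (q ^ j * c) * poly z (q ^ j * c)
      - poly (qEHT_op q s t z) (q ^ j * c) * poly y (q ^ j * c)) * w (q ^ j * c))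
    sums (w\<^sub>0 * poly (sigma2 q s t) 0 * poly (q_wronskian q y z) 0 / (1 - q)^2)"
proof -
  define X where "X j = q ^ j * c" for j
  define W where "W j = w (X j) * poly (sigma2 q s t) (X j) * poly (q_wronskian q y z) (X j) / (1 - q)^2" for j
  define D where "D j = X j * (poly (qEHT_op q s t y) (X j) * poly z (X j)
      - poly (qEHT_op q s t z) (X j) * poly y (X j)) * w (X j)" for j
  have m: "(1 - q)^2 \<noteq> 0" using q by simp
  have D: "D j = W j - q * poly s (X j) * w (X j) * poly (q_wronskian q y z) (X j / q) / (1 - q)^2" for j
  proof -
    have "X j \<noteq> 0" using c q by (simp add: X_def)
    then have "(1 - q)^2 * D j = (poly (sigma2 q s t) (X j) * poly (q_wronskian q y z) (X j)
        - q * poly s (X j) * poly (q_wronskian q y z) (X j / q)) * w (X j)"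
      using qEHT_op_wronskian[of q "X j" s t y z] q by (simp add: D_def mult.assoc)
    then show ?thesis using m by (simp add: W_def field_simps)
  qed
  have XS: "X (Suc j) / q = X j" for j using q by (simp add: X_def)
  \<comment> \<open>By the Pearson relation the second term of \<open>D (Suc j)\<close> is \<open>- W j\<close>, so the partial sums telescope.\<close>
  have "D 0 = W 0" using c by (simp add: D X_def)
  moreover have "D (Suc j) = W (Suc j) - W j" for j
  proof -
    have "q * poly s (X (Suc j)) * w (X (Suc j)) = poly (sigma2 q s t) (X j) * w (X j)"
      using pearson[of j] by (simp add: X_def)
    then show ?thesis by (simp only: D XS) (simp add: W_def mult_ac)
  qed
  ultimately have "(\<Sum>j<Suc N. D j) = W N" for N by (induction N) simp_all
  moreover have "W \<longlonglongrightarrow> w\<^sub>0 * poly (sigma2 q s t) 0 * poly (q_wronskian q y z) 0 / (1 - q)^2"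
    unfolding W_def X_def using q by (intro tendsto_intros lim poly_geometric_tendsto) auto
  ultimately have "(\<lambda>N. \<Sum>j<Suc N. D j)
      \<longlonglongrightarrow> w\<^sub>0 * poly (sigma2 q s t) 0 * poly (q_wronskian q y z) 0 / (1 - q)^2"
    by simp
  then have "D sums (w\<^sub>0 * poly (sigma2 q s t) 0 * poly (q_wronskian q y z) 0 / (1 - q)^2)"
    unfolding sums_def by (rule LIMSEQ_imp_Suc)
  then show ?thesis unfolding D_def[abs_def] X_def[abs_def] .
qed

section \<open>The Jackson weight\<close>

locale qEHT_weight =
  fixes q a b a2 b2 k1 k2 :: real and s t :: "real poly"
  assumes q: "0 < q" "q < 1"
    and zeros: "a < 0" "0 < b" "b < a2" "a2 \<le> b2"
    and s_factor: "\<And>x. poly s x = k1 * (x - a) * (x - b)"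
    and sigma2_factor: "\<And>x. poly (sigma2 q s t) x = k2 * (x - a2) * (x - b2)"
begin

definition rho :: "real \<Rightarrow> real" where
  "rho x = (qpoch_inf (q * x / a) q * qpoch_inf (q * x / b) q) /
           (qpoch_inf (x / a2) q * qpoch_inf (x / b2) q)"

definition lattice_sum :: "real \<Rightarrow> real poly \<Rightarrow> real" where
  "lattice_sum c p = (\<Sum>j. q ^ j * (poly p (q ^ j * c) * rho (q ^ j * c)))"

definition Phi :: "real poly \<Rightarrow> real" where
  "Phi p = jackson_int q a b (\<lambda>x. poly p x * rho x)"

lemma Phi_eq_lattice_sums: "Phi p = (1 - q) * b * lattice_sum b p - (1 - q) * a * lattice_sum a p"
  by (simp add: Phi_def lattice_sum_def jackson_int_def)

lemma q_mult_in_interval: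
  assumes "a \<le> x" "x \<le> b"
  shows "a < q * x" "q * x < b"
proof -
  have "0 \<le> q * (x - a)" "0 \<le> q * (b - x)" using assms q by simp_all
  moreover have "(1 - q) * a < 0" "0 < (1 - q) * b" using q zeros by (simp_all add: mult_pos_neg)
  ultimately show "a < q * x" "q * x < b" by (simp_all add: algebra_simps)
qed

lemma lattice_in_interval: "c \<in> {a, b} \<Longrightarrow> a \<le> q ^ j * c \<and> q ^ j * c \<le> b"
proof (induction j)
  case 0 then show ?case using zeros by auto
next
  case (Suc j) then show ?case using q_mult_in_interval[of "q ^ j * c"] by (simp add: mult.assoc)
qed

lemma qpoch_args_lt_1:
  assumes "a \<le> x" "x \<le> b"
  shows "q * x / a < 1" "q * x / b < 1" "x / a2 < 1" "x / b2 < 1"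
  using q_mult_in_interval[OF assms] assms zeros by (simp_all add: divide_less_eq)

lemma rho_pos: "a \<le> x \<Longrightarrow> x \<le> b \<Longrightarrow> rho x > 0"
  unfolding rho_def using qpoch_args_lt_1[of x] q
  by (intro divide_pos_pos mult_pos_pos qpoch_inf_pos) auto

lemma rho_lattice_tendsto:
  assumes "c \<in> {a, b}"
  shows "(\<lambda>j. rho (q ^ j * c)) \<longlonglongrightarrow> 1"
proof -
  have "a \<le> c" "c \<le> b" using assms zeros by auto
  note args = qpoch_args_lt_1[OF this]
  have "rho (q ^ j * c) = qpoch_inf ((q * c / a) * q ^ j) q * qpoch_inf ((q * c / b) * q ^ j) q /
      (qpoch_inf ((c / a2) * q ^ j) q * qpoch_inf ((c / b2) * q ^ j) q)" for j
    unfolding rho_def by (simp add: mult_ac)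
  moreover have "(\<lambda>j. qpoch_inf ((q * c / a) * q ^ j) q * qpoch_inf ((q * c / b) * q ^ j) q /
      (qpoch_inf ((c / a2) * q ^ j) q * qpoch_inf ((c / b2) * q ^ j) q)) \<longlonglongrightarrow> 1 * 1 / (1 * 1)"
    using args q by (intro tendsto_intros qpoch_inf_shift_tendsto) auto
  ultimately show ?thesis by simp
qed

lemma summable_lattice:
  assumes "c \<in> {a, b}"
  shows "summable (\<lambda>j. q ^ j * (poly p (q ^ j * c) * rho (q ^ j * c)))"
proof (rule summable_geometric_mult_convergent)
  have "(\<lambda>j. poly p (q ^ j * c) * rho (q ^ j * c)) \<longlonglongrightarrow> poly p 0 * 1"
    using q by (intro tendsto_mult poly_geometric_tendsto rho_lattice_tendsto assms) auto
  then show "convergent (\<lambda>j. poly p (q ^ j * c) * rho (q ^ j * c))" by (rule convergentI)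
qed (use q in auto)

lemma lattice_sum_add: "c \<in> {a, b} \<Longrightarrow> lattice_sum c (p + r) = lattice_sum c p + lattice_sum c r"
  unfolding lattice_sum_def using suminf_add[OF summable_lattice[of c p] summable_lattice[of c r]]
  by (simp add: algebra_simps)

lemma lattice_sum_smult: "c \<in> {a, b} \<Longrightarrow> lattice_sum c (smult k p) = k * lattice_sum c p"
  unfolding lattice_sum_def by (subst suminf_mult[OF summable_lattice, symmetric]) (simp_all add: mult_ac)

lemma lattice_term_nonneg:
  assumes "c \<in> {a, b}"
  shows "0 \<le> q ^ j * (poly (p * p) (q ^ j * c) * rho (q ^ j * c))"
proof -
  have "0 < rho (q ^ j * c)" using rho_pos lattice_in_interval[OF assms] by blast
  moreover have "0 \<le> poly (p * p) (q ^ j * c)" by simp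
  ultimately show ?thesis using q by simp
qed

lemma lattice_sum_nonneg: "c \<in> {a, b} \<Longrightarrow> lattice_sum c (p * p) \<ge> 0"
  unfolding lattice_sum_def by (intro suminf_nonneg summable_lattice lattice_term_nonneg)

lemma lattice_sum_pos:
  assumes "p \<noteq> 0"
  shows "lattice_sum b (p * p) > 0"
proof -
  have "inj (\<lambda>j::nat. q ^ j * b)"
    using q zeros by (intro injI) (simp add: power_inject_exp')
  then have "infinite (range (\<lambda>j. q ^ j * b))" by (rule range_inj_infinite)
  then obtain j where j: "poly p (q ^ j * b) \<noteq> 0"
    using poly_roots_finite[OF assms] by (metis (mono_tags, lifting) finite_subset image_subset_iff mem_Collect_eq)
  have "0 < rho (q ^ j * b)" using rho_pos lattice_in_interval[of b j] by blast
  moreover have "0 < poly (p * p) (q ^ j * b)" by (metis j poly_mult not_real_square_gt_zero)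
  ultimately have "0 < q ^ j * (poly (p * p) (q ^ j * b) * rho (q ^ j * b))" using q by simp
  then show ?thesis
    unfolding lattice_sum_def using summable_lattice[of b "p * p"] lattice_term_nonneg[of b]
    by (subst suminf_pos_iff) auto
qed

sublocale Phi: positive_poly_functional Phi
proof
  show "Phi (p + r) = Phi p + Phi r" for p r
    by (simp add: Phi_eq_lattice_sums lattice_sum_add algebra_simps)
  show "Phi (smult c p) = c * Phi p" for c p
    by (simp add: Phi_eq_lattice_sums lattice_sum_smult algebra_simps)
  show "Phi (p * p) > 0" if "p \<noteq> 0" for p
  proof -
    have "(1 - q) * b * lattice_sum b (p * p) > 0" using lattice_sum_pos[OF that] q zeros by simp
    moreover have "(1 - q) * a \<le> 0" using q zeros by (simp add: mult_nonneg_nonpos)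
    then have "(1 - q) * a * lattice_sum a (p * p) \<le> 0"
      using lattice_sum_nonneg[of a p] by (simp add: mult_nonpos_nonneg)
    ultimately show ?thesis by (simp add: Phi_eq_lattice_sums)
  qed
qed

lemma rho_q_shift:
  assumes "a \<le> x" "x \<le> b"
  shows "rho (q * x) * (1 - q * x / a) * (1 - q * x / b) = rho x * (1 - x / a2) * (1 - x / b2)"
proof -
  have qx: "a \<le> q * x" "q * x \<le> b" using q_mult_in_interval[OF assms] by auto
  note lt1 = qpoch_args_lt_1[OF assms] and lt1' = qpoch_args_lt_1[OF qx]
  have rec: "qpoch_inf u q = (1 - u) * qpoch_inf (q * u) q" if "u < 1" for u
    using qpoch_inf_rec[of q u] that q by (simp add: mult.commute)
  define A1 A2 B1 B2 where "A1 = qpoch_inf (q * (q * x) / a) q" "A2 = qpoch_inf (q * (q * x) / b) q"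
    "B1 = qpoch_inf (q * x / a2) q" "B2 = qpoch_inf (q * x / b2) q"
  have rho_qx: "rho (q * x) = A1 * A2 / (B1 * B2)" by (simp add: rho_def A1_A2_B1_B2_def)
  have rho_x: "rho x = ((1 - q * x / a) * A1) * ((1 - q * x / b) * A2) /
      (((1 - x / a2) * B1) * ((1 - x / b2) * B2))"
    unfolding rho_def A1_A2_B1_B2_def using rec[OF lt1(1)] rec[OF lt1(2)] rec[OF lt1(3)] rec[OF lt1(4)]
    by (simp add: mult_ac times_divide_eq_right)
  have pos: "B1 > 0" "B2 > 0" "1 - x / a2 > 0" "1 - x / b2 > 0"
    using lt1 lt1' q by (auto simp: A1_A2_B1_B2_def intro: qpoch_inf_pos)
  have cancel: "A1 * A2 / (B1 * B2) * u1 * u2 = (u1 * A1) * (u2 * A2) / ((v1 * B1) * (v2 * B2)) * v1 * v2"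
    if "B1 \<noteq> 0" "B2 \<noteq> 0" "v1 \<noteq> 0" "v2 \<noteq> 0" for u1 u2 v1 v2 :: real
    using that by (simp add: field_simps)
  show ?thesis unfolding rho_qx rho_x by (rule cancel) (use pos in auto)
qed

lemma pearson:
  assumes "a \<le> x" "x \<le> b"
  shows "q * poly s (q * x) * rho (q * x) = poly (sigma2 q s t) x * rho x"
proof -
  have "poly (sigma2 q s t) 0 = q * poly s 0" by (simp add: sigma2_def)
  then have k: "k2 * a2 * b2 = q * (k1 * a * b)" using s_factor[of 0] sigma2_factor[of 0] by simp
  have nz: "a \<noteq> 0" "b \<noteq> 0" "a2 \<noteq> 0" "b2 \<noteq> 0" using zeros by auto
  have "q * poly s (q * x) * rho (q * x) = q * (k1 * a * b) * (rho (q * x) * (1 - q * x / a) * (1 - q * x / b))"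
    using nz by (simp add: s_factor field_simps)
  also have "\<dots> = k2 * a2 * b2 * (rho x * (1 - x / a2) * (1 - x / b2))"
    by (simp only: rho_q_shift[OF assms] k)
  also have "\<dots> = poly (sigma2 q s t) x * rho x"
    using nz by (simp add: sigma2_factor field_simps)
  finally show ?thesis .
qed

lemma Phi_qEHT_op_symmetric: "Phi (qEHT_op q s t y * z) = Phi (y * qEHT_op q s t z)"
proof -
  let ?L = "qEHT_op q s t"
  let ?B = "poly (sigma2 q s t) 0 * poly (q_wronskian q y z) 0 / (1 - q)^2"
  have branch: "c * (lattice_sum c (?L y * z) - lattice_sum c (y * ?L z)) = ?B" if c: "c \<in> {a, b}" for c
  proof -
    have c0: "c \<noteq> 0" "poly s c = 0" using c zeros by (auto simp: s_factor)
    have "q * poly s (q ^ Suc j * c) * rho (q ^ Suc j * c) = poly (sigma2 q s t) (q ^ j * c) * rho (q ^ j * c)" for j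
      using pearson[of "q ^ j * c"] lattice_in_interval[OF c, of j] by (simp add: mult.assoc)
    from qEHT_op_lattice_sums[OF q c0 this rho_lattice_tendsto[OF c]]
    have "(\<lambda>j. q ^ j * c * (poly (?L y) (q ^ j * c) * poly z (q ^ j * c)
        - poly (?L z) (q ^ j * c) * poly y (q ^ j * c)) * rho (q ^ j * c)) sums ?B"
      by simp
    moreover have "(\<lambda>j. c * (q ^ j * (poly (?L y * z) (q ^ j * c) * rho (q ^ j * c))
        - q ^ j * (poly (y * ?L z) (q ^ j * c) * rho (q ^ j * c))))
      sums (c * (lattice_sum c (?L y * z) - lattice_sum c (y * ?L z)))"
      unfolding lattice_sum_def by (intro sums_mult sums_diff summable_sums summable_lattice c)
    ultimately show ?thesis by (simp add: algebra_simps sums_iff)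
  qed
  have "Phi (?L y * z) - Phi (y * ?L z) =
     (1 - q) * (b * (lattice_sum b (?L y * z) - lattice_sum b (y * ?L z))
       - a * (lattice_sum a (?L y * z) - lattice_sum a (y * ?L z)))"
    by (simp add: Phi_eq_lattice_sums algebra_simps)
  also have "\<dots> = 0" using branch[of a] branch[of b] by simp
  finally show ?thesis by simp
qed

end

theorem theorem4p5:
  fixes q :: real and \<sigma>1 \<tau> :: "real poly" and a1 b1 a2 b2 :: real
  assumes q: "0 < q" "q < 1"
    and deg\<sigma>1: "degree \<sigma>1 \<le> 2"
    and deg\<tau>: "degree \<tau> \<le> 1"
    and \<tau>1: "poly (pderiv \<tau>) 0 \<noteq> 0"
    and s1nz: "dd0 \<sigma>1 \<noteq> 0"
    and s2nz: "dd0 (sigma2 q \<sigma>1 \<tau>) \<noteq> 0"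
    and \<sigma>1_fact: "\<forall>x. poly \<sigma>1 x = (1/2) * dd0 \<sigma>1 * (x - a1) * (x - b1)"
    and \<sigma>2_fact: "\<forall>x. poly (sigma2 q \<sigma>1 \<tau>) x = (1/2) * dd0 (sigma2 q \<sigma>1 \<tau>) * (x - a2) * (x - b2)"
    and zeros: "a1 < 0" "0 < b1" "b1 < a2" "a2 \<le> b2"
    and Lambda: "q^2 * (q powi (-2) * (1 + (1 - 1/q) * poly (pderiv \<tau>) 0 / ((1/2) * dd0 \<sigma>1))) < 0"
  shows "\<exists>P :: nat \<Rightarrow> real poly. \<exists>d :: nat \<Rightarrow> real.
     (\<forall>n. degree (P n) = n \<and> solves_qEHT q \<sigma>1 \<tau> (qEHT_lambda q \<sigma>1 \<tau> n) (poly (P n)) \<and> d n \<noteq> 0) \<and>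
     (\<forall>m n. jackson_int q a1 b1
        (\<lambda>x. poly (P n) x * poly (P m) x *
              ((qpoch_inf (q * x / a1) q * qpoch_inf (q * x / b1) q) /
               (qpoch_inf (x / a2) q * qpoch_inf (x / b2) q)))
        = (if m = n then d n else 0))"
proof -
  interpret qEHT_weight q a1 b1 a2 b2 "(1/2) * dd0 \<sigma>1" "(1/2) * dd0 (sigma2 q \<sigma>1 \<tau>)" \<sigma>1 \<tau>
    using q zeros \<sigma>1_fact \<sigma>2_fact by unfold_locales auto
  obtain P d where P: "\<forall>n. degree (P n) = n \<and> qEHT_op q \<sigma>1 \<tau> (P n) = smult (- qEHT_lambda q \<sigma>1 \<tau> n) (P n) \<and> d n \<noteq> 0"
    and orth: "\<forall>m n. Phi (P n * P m) = (if m = n then d n else 0)"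
    using Phi.orthogonal_eigenpolynomials[OF degree_qEHT_op_le[OF deg\<sigma>1 deg\<tau>] Phi_qEHT_op_symmetric
        coeff_qEHT_op_top[OF deg\<sigma>1 deg\<tau>]]
    by blast
  have solves: "solves_qEHT q \<sigma>1 \<tau> (qEHT_lambda q \<sigma>1 \<tau> n) (poly (P n))" for n
    using P q by (simp add: solves_qEHT_poly_iff)
  have weighted: "jackson_int q a1 b1 (\<lambda>x. poly (P n) x * poly (P m) x *
      ((qpoch_inf (q * x / a1) q * qpoch_inf (q * x / b1) q) /
       (qpoch_inf (x / a2) q * qpoch_inf (x / b2) q))) = Phi (P n * P m)" for m n
    by (simp add: Phi_def rho_def)
  show ?thesis
  proof (intro exI[of _ P] exI[of _ d] conjI)
    show "\<forall>n. degree (P n) = n \<and> solves_qEHT q \<sigma>1 \<tau> (qEHT_lambda q \<sigma>1 \<tau> n) (poly (P n)) \<and> d n \<noteq> 0"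
      using P solves by simp
  qed (unfold weighted, rule orth)
qed

end
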